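(* Let $\psi$ be a convex function $\psi:\mathbb{R}^n\to\mathbb{R}\cup\{+\infty\}$ whose domain has nonempty interior, and let $F_1,F_2:\mathbb{R}\to(0,\infty)$ be measurable with $0<I(F_1\circ\psi,\psi)<\infty$ and $0<I(F_2\circ\psi^*,\psi^* )<\infty$. Then: (a) For $h\in\Phi$, $$as_{h,F_1,F_2}^{orlicz}(\psi)\le I(F_1\circ\psi,\psi)\cdot h\Big(\frac{(\sqrt{2\pi})^n}{I(F_2\circ\psi^*,\psi^* )}\Big),$$ and if in addition $F_2\circ\psi^*$ is log-concave, $$as_{h,F_1,F_2}^{orlicz}(\psi)\le G_{h,F_1,F_2}^{orlicz}(\psi)\le I(F_1\circ\psi,\psi)\cdot h\Big(\frac{(\sqrt{2\pi})^n}{I(F_2\circ\psi^*,\psi^* )}\Big).$$ In particular, for $h\in\Phi$ and $f=e^{-\psi}$ (with $f^\circ=e^{-\psi^*}$), $$as_h^{orlicz}(f)\le G_h^{orlicz}(f)\le I(f)\cdot h\Big(\frac{(\sqrt{2\pi})^n}{I(f^\circ)}\Big).$$ (b) For $h\in\Psi$, the same inequalities hold reversed: $$as_{h,F_1,F_2}^{orlicz}(\psi)\ge I(F_1\circ\psi,\psi)\cdot h\Big(\frac{(\sqrt{2\pi})^n}{I(F_2\circ\psi^*,\psi^* )}\Big),$$ and if in addition $F_2\circ\psi^*$ is log-concave, $$as_{h,F_1,F_2}^{orlicz}(\psi)\ge G_{h,F_1,F_2}^{orlicz}(\psi)\ge I(F_1\circ\psi,\psi)\cdot h\Big(\frac{(\sqrt{2\pi})^n}{I(F_2\circ\psi^*,\psi^*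 )}\Big);$$ in particular, for $f=e^{-\psi}$, $$as_h^{orlicz}(f)\ge G_h^{orlicz}(f)\ge I(f)\cdot h\Big(\frac{(\sqrt{2\pi})^n}{I(f^\circ)}\Big).$$
   Context: $\psi^*(y)=\sup_{x\in\mathbb{R}^n}(\langle x,y\rangle-\psi(x))$ is the Legendre transform. $X_\psi=\{x:\psi(x)<\infty,\ \nabla^2\psi(x)\text{ (Alexandrov Hessian) exists and is invertible}\}$. For a function $g$ on $X_{\psi^*}$, $I(g,\psi^* )=\int_{X_{\psi^*}}g(y)\,dy$; similarly $I(F_1\circ\psi,\psi)=\int_{X_\psi}F_1(\psi(x))\,dx$, $I(f)=\int f$. $\mathcal{F}^+_{\psi^*}$ is the set of positive integrable functions $g$ on $X_{\psi^*}$ with $0<I(g,\psi^* )<\infty$, and $\mathcal{L}_{\psi^*}$ its subset of log-concave functions. $h:(0,\infty)\to(0,\infty)$ continuous; $\Phi$ is the class of $h$ that are constant or strictly convex; $\Psi$ is the class of $h$ that are constant or increasing strictly concave. The Orlicz mixed integral is $V_{h,F_1,F_2}(\psi,g)=\int_{X_\psi}h\Big(\frac{g(\nabla\psi(x))}{F_2(\langle x,\nabla\psi(x)\rangle-\psi(x))}\Big)F_1(\psi(x))\,dx$. For $h\in\Phi$: $as_{h,F_1,F_2}^{orlicz}(\psi)=\inf_{g\in\mathcal{F}^+_{\psi^*}}V_{h,F_1,F_2}\big(\psi,\frac{(\sqrt{2\pi})^n g}{I(g,\psi^* )}\big)$ and $G_{h,F_1,F_2}^{orlicz}(\psi)$ is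 the same infimum over $g\in\mathcal{L}_{\psi^*}$; for $h\in\Psi$ both are defined with $\sup$ in place of $\inf$. For $f=e^{-\psi}$, $as_h^{orlicz}(f)=as_{h,e^{-t},e^{-t}}^{orlicz}(\psi)$ and $G_h^{orlicz}(f)=G_{h,e^{-t},e^{-t}}^{orlicz}(\psi)$. Functions are assumed smooth and integrable enough for all expressions to be well defined. *)

theory Defs
  imports "HOL-Analysis.Analysis"
begin

definition dom_e :: "('a::euclidean_space \<Rightarrow> ereal) \<Rightarrow> 'a set" where
  "dom_e \<psi> = {x. \<psi> x < \<infinity>}"

definition convex_ereal :: "('a::euclidean_space \<Rightarrow> ereal) \<Rightarrow> bool" where
  "convex_ereal \<psi> \<longleftrightarrow> (\<forall>x. \<psi> x \<noteq> -\<infinity>) \<and>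
     (\<forall>x y t. 0 < t \<and> t < 1 \<longrightarrow>
        \<psi> ((1 - t) *\<^sub>R x + t *\<^sub>R y) \<le> ereal (1 - t) * \<psi> x + ereal t * \<psi> y)"

text \<open>Real-valued version (meaningful where the function is finite).\<close>
definition fin :: "('a \<Rightarrow> ereal) \<Rightarrow> 'a \<Rightarrow> real" where
  "fin \<psi> x = real_of_ereal (\<psi> x)"

definition legendre :: "('a::euclidean_space \<Rightarrow> ereal) \<Rightarrow> 'a \<Rightarrow> ereal" where
  "legendre \<psi> y = (SUP x. ereal (inner x y) - \<psi> x)"

definition grad :: "('a::euclidean_space \<Rightarrow> ereal) \<Rightarrow> 'a \<Rightarrow> 'a" where
  "grad \<psi> x = (THE g. (fin \<psi> has_derivative (\<lambda>v. inner g v)) (at x))"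

definition alex_hessian :: "('a::euclidean_space \<Rightarrow> ereal) \<Rightarrow> 'a \<Rightarrow> ('a \<Rightarrow> 'a) \<Rightarrow> bool" where
  "alex_hessian \<psi> x A \<longleftrightarrow> x \<in> interior (dom_e \<psi>) \<and> linear A \<and>
     (\<forall>u v. inner (A u) v = inner u (A v)) \<and>
     (\<exists>g. ((\<lambda>h. (fin \<psi> (x + h) - fin \<psi> x - inner g h - inner (A h) h / 2) / (norm h)\<^sup>2)
            \<longlongrightarrow> 0) (at 0))"

definition Xset :: "('a::euclidean_space \<Rightarrow> ereal) \<Rightarrow> 'a set" where
  "Xset \<psi> = {x. \<psi> x < \<infinity> \<and> (\<exists>A. alex_hessian \<psi> x A \<and> bij A)}"

definition Iint :: "('a::euclidean_space \<Rightarrow> ereal) \<Rightarrow> ('a \<Rightarrow> real) \<Rightarrow> ennreal" where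
  "Iint \<psi> g = (\<integral>\<^sup>+ x \<in> Xset \<psi>. ennreal (g x) \<partial>lebesgue)"

definition IcompF :: "(real \<Rightarrow> real) \<Rightarrow> ('a::euclidean_space \<Rightarrow> ereal) \<Rightarrow> ennreal" where
  "IcompF F \<psi> = Iint \<psi> (\<lambda>x. F (fin \<psi> x))"

definition const_pos :: "(real \<Rightarrow> real) \<Rightarrow> bool" where
  "const_pos h \<longleftrightarrow> (\<exists>c. \<forall>t>0. h t = c)"

definition strictly_convex_pos :: "(real \<Rightarrow> real) \<Rightarrow> bool" where
  "strictly_convex_pos h \<longleftrightarrow> (\<forall>x>0. \<forall>y>0. \<forall>t. x \<noteq> y \<and> 0 < t \<and> t < 1 \<longrightarrow>
       h ((1 - t) * x + t * y) < (1 - t) * h x + t * h y)"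

definition strictly_concave_pos :: "(real \<Rightarrow> real) \<Rightarrow> bool" where
  "strictly_concave_pos h \<longleftrightarrow> (\<forall>x>0. \<forall>y>0. \<forall>t. x \<noteq> y \<and> 0 < t \<and> t < 1 \<longrightarrow>
       h ((1 - t) * x + t * y) > (1 - t) * h x + t * h y)"

definition PhiClass :: "(real \<Rightarrow> real) set" where
  "PhiClass = {h. const_pos h \<or> strictly_convex_pos h}"

definition PsiClass :: "(real \<Rightarrow> real) set" where
  "PsiClass = {h. const_pos h \<or> (mono_on {0<..} h \<and> strictly_concave_pos h)}"

definition log_concave :: "('a::euclidean_space \<Rightarrow> real) \<Rightarrow> bool" where
  "log_concave G \<longleftrightarrow> (\<forall>x. 0 \<le> G x) \<and>
     (\<forall>x y t. 0 \<le> t \<and> t \<le> 1 \<longrightarrow> G x powr (1 - t) * G y powr t \<le> G ((1 - t) *\<^sub>R x + t *\<^sub>R y))"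

definition log_concave_on :: "'a::euclidean_space set \<Rightarrow> ('a \<Rightarrow> real) \<Rightarrow> bool" where
  "log_concave_on Y g \<longleftrightarrow> (\<exists>G. log_concave G \<and> (\<forall>y\<in>Y. G y = g y))"

definition Fplus :: "('a::euclidean_space \<Rightarrow> ereal) \<Rightarrow> ('a \<Rightarrow> real) set" where
  "Fplus \<psi> = {g. (\<forall>y\<in>Xset (legendre \<psi>). 0 < g y) \<and>
      set_borel_measurable lebesgue (Xset (legendre \<psi>)) g \<and>
      0 < Iint (legendre \<psi>) g \<and> Iint (legendre \<psi>) g < \<infinity>}"

definition Lclass :: "('a::euclidean_space \<Rightarrow> ereal) \<Rightarrow> ('a \<Rightarrow> real) set" where
  "Lclass \<psi> = {g \<in> Fplus \<psi>. log_concave_on (Xset (legendre \<psi>)) g}"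

definition Vorlicz :: "(real \<Rightarrow> real) \<Rightarrow> (real \<Rightarrow> real) \<Rightarrow> (real \<Rightarrow> real) \<Rightarrow>
    ('a::euclidean_space \<Rightarrow> ereal) \<Rightarrow> ('a \<Rightarrow> real) \<Rightarrow> ennreal" where
  "Vorlicz h F1 F2 \<psi> g = (\<integral>\<^sup>+ x \<in> Xset \<psi>.
      ennreal (h (g (grad \<psi> x) / F2 (inner x (grad \<psi> x) - fin \<psi> x)) * F1 (fin \<psi> x)) \<partial>lebesgue)"

definition normalize :: "('a::euclidean_space \<Rightarrow> ereal) \<Rightarrow> ('a \<Rightarrow> real) \<Rightarrow> 'a \<Rightarrow> real" where
  "normalize \<psi> g = (\<lambda>y. sqrt (2 * pi) ^ DIM('a) * g y / enn2real (Iint (legendre \<psi>) g))"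

definition as_orlicz_inf :: "(real \<Rightarrow> real) \<Rightarrow> (real \<Rightarrow> real) \<Rightarrow> (real \<Rightarrow> real) \<Rightarrow>
    ('a::euclidean_space \<Rightarrow> ereal) \<Rightarrow> ennreal" where
  "as_orlicz_inf h F1 F2 \<psi> = (INF g \<in> Fplus \<psi>. Vorlicz h F1 F2 \<psi> (normalize \<psi> g))"

definition G_orlicz_inf :: "(real \<Rightarrow> real) \<Rightarrow> (real \<Rightarrow> real) \<Rightarrow> (real \<Rightarrow> real) \<Rightarrow>
    ('a::euclidean_space \<Rightarrow> ereal) \<Rightarrow> ennreal" where
  "G_orlicz_inf h F1 F2 \<psi> = (INF g \<in> Lclass \<psi>. Vorlicz h F1 F2 \<psi> (normalize \<psi> g))"

definition as_orlicz_sup :: "(real \<Rightarrow> real) \<Rightarrow> (real \<Rightarrow> real) \<Rightarrow> (real \<Rightarrow> real) \<Rightarrow>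
    ('a::euclidean_space \<Rightarrow> ereal) \<Rightarrow> ennreal" where
  "as_orlicz_sup h F1 F2 \<psi> = (SUP g \<in> Fplus \<psi>. Vorlicz h F1 F2 \<psi> (normalize \<psi> g))"

definition G_orlicz_sup :: "(real \<Rightarrow> real) \<Rightarrow> (real \<Rightarrow> real) \<Rightarrow> (real \<Rightarrow> real) \<Rightarrow>
    ('a::euclidean_space \<Rightarrow> ereal) \<Rightarrow> ennreal" where
  "G_orlicz_sup h F1 F2 \<psi> = (SUP g \<in> Lclass \<psi>. Vorlicz h F1 F2 \<psi> (normalize \<psi> g))"

definition orlicz_bound :: "(real \<Rightarrow> real) \<Rightarrow> (real \<Rightarrow> real) \<Rightarrow> (real \<Rightarrow> real) \<Rightarrow>
    ('a::euclidean_space \<Rightarrow> ereal) \<Rightarrow> ennreal" where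
  "orlicz_bound h F1 F2 \<psi> = IcompF F1 \<psi> *
      ennreal (h (sqrt (2 * pi) ^ DIM('a) / enn2real (IcompF F2 (legendre \<psi>))))"

text \<open>The functional case f = exp(-psi): F1 = F2 = exp(-t).\<close>
definition expneg :: "real \<Rightarrow> real" where
  "expneg t = exp (- t)"

end

theory Submission
  imports Defs
begin

text \<open>The function \<open>g\<^sub>0 = F\<^sub>2 \<circ> \<psi>\<^sup>*\<close> is an admissible competitor that makes the Orlicz
  integrand constant: by the Fenchel equality \<open>\<psi>\<^sup>*(\<nabla>\<psi>(x)) = \<langle>x, \<nabla>\<psi>(x)\<rangle> - \<psi>(x)\<close> on \<open>X\<^sub>\<psi>\<close>,
  the quotient \<open>g\<^sub>0(\<nabla>\<psi>(x)) / F\<^sub>2(\<langle>x, \<nabla>\<psi>(x)\<rangle> - \<psi>(x))\<close> equals \<open>1\<close>, so after normalisation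
  \<open>V(\<psi>, g\<^sub>0)\<close> is exactly \<open>I(F\<^sub>1 \<circ> \<psi>, \<psi>) h((\<surd>2\<pi>)\<^sup>n / I(F\<^sub>2 \<circ> \<psi>\<^sup>*, \<psi>\<^sup>*))\<close>. Comparing the infimum
  (supremum) with this value gives all inequalities, for every positive \<open>h\<close>; \<open>e\<^sup>-\<^sup>\<psi>\<^sup>*\<close> is
  log-concave because \<open>\<psi>\<^sup>*\<close> is convex. The real work is admissibility, i.e. that
  \<open>X\<^sub>\<psi>\<^sub>*\<close> is Lebesgue measurable: for a function continuous on an open set, the gradient
  and Hessian candidates are limits of difference quotients, hence Borel, and the
  remainder condition can be tested on a countable dense set of increments.\<close>

section \<open>Convex functions with values in \<open>\<real> \<union> {+\<infinity>}\<close>\<close>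

lemma convex_ereal_not_MInfty: "convex_ereal \<phi> \<Longrightarrow> \<phi> x \<noteq> -\<infinity>"
  unfolding convex_ereal_def by blast

lemma ereal_fin: "\<phi> x \<noteq> -\<infinity> \<Longrightarrow> \<phi> x < \<infinity> \<Longrightarrow> \<phi> x = ereal (fin \<phi> x)"
  by (cases "\<phi> x") (auto simp: fin_def)

lemma convex_ereal_finite_on_interior:
  assumes "convex_ereal \<phi>" "x \<in> interior (dom_e \<phi>)"
  shows "\<phi> x = ereal (fin \<phi> x)"
  using assms interior_subset convex_ereal_not_MInfty ereal_fin by (fastforce simp: dom_e_def)

lemma convex_ereal_combination:
  assumes c: "convex_ereal \<phi>" and x: "\<phi> x = ereal a" and y: "\<phi> y = ereal b"
    and u: "0 \<le> u" "0 \<le> v" "u + v = 1"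
  shows "\<exists>c. \<phi> (u *\<^sub>R x + v *\<^sub>R y) = ereal c \<and> c \<le> u * a + v * b"
proof (cases "u = 0 \<or> v = 0")
  case True
  then show ?thesis using x y u by auto
next
  case False
  then have "\<phi> ((1 - v) *\<^sub>R x + v *\<^sub>R y) \<le> ereal (1 - v) * \<phi> x + ereal v * \<phi> y"
    using c u unfolding convex_ereal_def by auto
  then have "\<phi> (u *\<^sub>R x + v *\<^sub>R y) \<le> ereal (u * a + v * b)"
    using x y u by (simp add: eq_diff_eq[symmetric])
  then show ?thesis
    using convex_ereal_not_MInfty[OF c] by (cases "\<phi> (u *\<^sub>R x + v *\<^sub>R y)") auto
qed

lemma convex_dom_e:
  assumes c: "convex_ereal \<phi>"
  shows "convex (dom_e \<phi>)"
proof (rule convexI)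
  fix x y and u v :: real
  assume "x \<in> dom_e \<phi>" "y \<in> dom_e \<phi>" and uv: "0 \<le> u" "0 \<le> v" "u + v = 1"
  then have "\<phi> x = ereal (fin \<phi> x)" "\<phi> y = ereal (fin \<phi> y)"
    using convex_ereal_not_MInfty[OF c] ereal_fin[of \<phi>] by (auto simp: dom_e_def)
  from convex_ereal_combination[OF c this uv] show "u *\<^sub>R x + v *\<^sub>R y \<in> dom_e \<phi>"
    by (auto simp: dom_e_def)
qed

lemma convex_on_fin_interior:
  assumes c: "convex_ereal \<phi>"
  shows "convex_on (interior (dom_e \<phi>)) (fin \<phi>)"
  unfolding convex_on_def
proof (intro conjI ballI allI impI)
  show "convex (interior (dom_e \<phi>))" using convex_dom_e[OF c] by simp
  fix x y and u v :: real
  assume "x \<in> interior (dom_e \<phi>)" "y \<in> interior (dom_e \<phi>)" and uv: "0 \<le> u" "0 \<le> v" "u + v = 1"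
  then have "\<phi> x = ereal (fin \<phi> x)" "\<phi> y = ereal (fin \<phi> y)"
    using convex_ereal_finite_on_interior[OF c] by auto
  from convex_ereal_combination[OF c this uv]
  show "fin \<phi> (u *\<^sub>R x + v *\<^sub>R y) \<le> u * fin \<phi> x + v * fin \<phi> y"
    by (auto simp: fin_def)
qed

lemma continuous_on_fin_interior:
  "convex_ereal \<phi> \<Longrightarrow> continuous_on (interior (dom_e \<phi>)) (fin \<phi>)"
  by (rule convex_on_continuous[OF open_interior convex_on_fin_interior])

lemma convex_ereal_legendre:
  fixes \<psi> :: "'a::euclidean_space \<Rightarrow> ereal"
  assumes c: "convex_ereal \<psi>" and dom: "dom_e \<psi> \<noteq> {}"
  shows "convex_ereal (legendre \<psi>)"
  unfolding convex_ereal_def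
proof (intro conjI allI impI)
  fix y
  obtain x0 where "x0 \<in> dom_e \<psi>" using dom by blast
  then have x0: "\<psi> x0 = ereal (fin \<psi> x0)"
    using convex_ereal_not_MInfty[OF c] ereal_fin[of \<psi>] by (auto simp: dom_e_def)
  have "ereal (inner x0 y) - \<psi> x0 \<le> legendre \<psi> y"
    unfolding legendre_def by (rule SUP_upper) simp
  then show "legendre \<psi> y \<noteq> -\<infinity>" using x0 by auto
next
  fix y1 y2 and t :: real
  assume t: "0 < t \<and> t < 1"
  show "legendre \<psi> ((1 - t) *\<^sub>R y1 + t *\<^sub>R y2) \<le> ereal (1 - t) * legendre \<psi> y1 + ereal t * legendre \<psi> y2"
    unfolding legendre_def[of \<psi> "(1 - t) *\<^sub>R y1 + t *\<^sub>R y2"]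
  proof (rule SUP_least)
    fix x :: 'a
    show "ereal (inner x ((1 - t) *\<^sub>R y1 + t *\<^sub>R y2)) - \<psi> x
        \<le> ereal (1 - t) * legendre \<psi> y1 + ereal t * legendre \<psi> y2"
    proof (cases "\<psi> x")
      case (real r)
      have le: "ereal (inner x y - r) \<le> legendre \<psi> y" for y
        using SUP_upper[of x UNIV "\<lambda>x. ereal (inner x y) - \<psi> x"] real by (simp add: legendre_def)
      have "ereal (inner x ((1 - t) *\<^sub>R y1 + t *\<^sub>R y2)) - \<psi> x
          = ereal (1 - t) * ereal (inner x y1 - r) + ereal t * ereal (inner x y2 - r)"
        using real by (simp add: inner_add_right algebra_simps)
      also have "\<dots> \<le> ereal (1 - t) * legendre \<psi> y1 + ereal t * legendre \<psi> y2"
        using t by (intro add_mono ereal_mult_left_mono le) auto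
      finally show ?thesis .
    qed (use convex_ereal_not_MInfty[OF c] in auto)
  qed
qed

lemma log_concave_on_expneg:
  fixes \<phi> :: "'a::euclidean_space \<Rightarrow> ereal"
  assumes c: "convex_ereal \<phi>"
  shows "log_concave_on (Xset \<phi>) (\<lambda>y. expneg (fin \<phi> y))"
proof -
  define G where "G y = (if \<phi> y = \<infinity> then 0 else exp (- fin \<phi> y))" for y
  have "log_concave G"
    unfolding log_concave_def
  proof (intro conjI allI impI)
    fix x show "0 \<le> G x" by (simp add: G_def)
  next
    fix x y and t :: real
    assume t: "0 \<le> t \<and> t \<le> 1"
    show "G x powr (1 - t) * G y powr t \<le> G ((1 - t) *\<^sub>R x + t *\<^sub>R y)"
    proof (cases "\<phi> x = \<infinity> \<or> \<phi> y = \<infinity>")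
      case True
      then show ?thesis by (auto simp: G_def)
    next
      case False
      then obtain a b where ab: "\<phi> x = ereal a" "\<phi> y = ereal b"
        using convex_ereal_not_MInfty[OF c] by (metis ereal_cases)
      obtain c where c: "\<phi> ((1 - t) *\<^sub>R x + t *\<^sub>R y) = ereal c" "c \<le> (1 - t) * a + t * b"
        using convex_ereal_combination[OF c ab, of "1 - t" t] t by auto
      have "G x powr (1 - t) * G y powr t = exp (- ((1 - t) * a + t * b))"
        using ab by (simp add: G_def fin_def powr_def exp_add[symmetric] algebra_simps)
      also have "\<dots> \<le> exp (- c)" using c(2) by simp
      also have "\<dots> = G ((1 - t) *\<^sub>R x + t *\<^sub>R y)" using c(1) by (simp add: G_def fin_def)
      finally show ?thesis .
    qed
  qed
  moreover have "\<forall>y\<in>Xset \<phi>. G y = expneg (fin \<phi> y)"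
    by (auto simp: Xset_def G_def expneg_def)
  ultimately show ?thesis unfolding log_concave_on_def by blast
qed

section \<open>Gradients and the Fenchel equality\<close>

lemma has_derivative_of_second_order_expansion:
  fixes f :: "'a::euclidean_space \<Rightarrow> real"
  assumes A: "linear A"
    and lim: "((\<lambda>h. (f (x + h) - f x - inner g h - inner (A h) h / 2) / (norm h)\<^sup>2) \<longlongrightarrow> 0) (at 0)"
  shows "(f has_derivative (\<lambda>h. inner g h)) (at x)"
  unfolding has_derivative_at
proof
  show "bounded_linear (inner g)" by (rule bounded_linear_inner_right)
  obtain B where B: "B > 0" "\<And>u. norm (A u) \<le> B * norm u" using linear_bounded_pos[OF A] by blast
  define Q where "Q h = (f (x + h) - f x - inner g h - inner (A h) h / 2) / (norm h)\<^sup>2" for h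
  have "((\<lambda>h. \<bar>Q h\<bar> * norm h + B * norm h / 2) \<longlongrightarrow> 0 * 0 + B * 0 / 2) (at 0)"
    using lim unfolding Q_def
    by (intro tendsto_intros tendsto_rabs_zero tendsto_norm_zero tendsto_ident_at) simp_all
  then have bound_0: "((\<lambda>h. \<bar>Q h\<bar> * norm h + B * norm h / 2) \<longlongrightarrow> 0) (at 0)" by simp
  have "norm (norm (f (x + h) - f x - inner g h) / norm h) \<le> \<bar>Q h\<bar> * norm h + B * norm h / 2"
    if "h \<noteq> 0" for h
  proof -
    have n: "norm h > 0" using that by simp
    have "\<bar>inner (A h) h\<bar> \<le> norm (A h) * norm h" by (rule Cauchy_Schwarz_ineq2)
    also have "\<dots> \<le> B * (norm h)\<^sup>2" using mult_right_mono[OF B(2)[of h], of "norm h"]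
      by (simp add: power2_eq_square mult.assoc)
    finally have quad: "\<bar>inner (A h) h\<bar> \<le> B * (norm h)\<^sup>2" .
    have "\<bar>f (x + h) - f x - inner g h\<bar> = \<bar>Q h * (norm h)\<^sup>2 + inner (A h) h / 2\<bar>"
      unfolding Q_def using n by simp
    also have "\<dots> \<le> (\<bar>Q h\<bar> * norm h + B * norm h / 2) * norm h"
      using quad abs_triangle_ineq[of "Q h * (norm h)\<^sup>2" "inner (A h) h / 2"]
      by (simp add: abs_mult power2_eq_square algebra_simps)
    finally show ?thesis using n by (simp add: divide_le_eq)
  qed
  then have "eventually (\<lambda>h. norm (norm (f (x + h) - f x - inner g h) / norm h)
      \<le> \<bar>Q h\<bar> * norm h + B * norm h / 2) (at 0)"
    by (auto simp: eventually_at_filter)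
  then show "(\<lambda>h. norm (f (x + h) - f x - inner g h) / norm h) \<midarrow>0\<rightarrow> 0"
    by (rule Lim_null_comparison[OF _ bound_0])
qed

lemma grad_eqI:
  assumes "(fin \<psi> has_derivative (\<lambda>h. inner g h)) (at x)"
  shows "grad \<psi> x = g"
  unfolding grad_def
proof (rule the_equality)
  show "(fin \<psi> has_derivative inner g) (at x)" using assms by simp
  fix g' assume "(fin \<psi> has_derivative inner g') (at x)"
  then have "inner g' = inner g" using has_derivative_unique assms by (metis (no_types, lifting) ext)
  then have "inner (g' - g) (g' - g) = 0" by (metis inner_diff_left right_minus_eq)
  then show "g' = g" by simp
qed

lemma convex_ereal_gradient_inequality:
  fixes \<psi> :: "'a::euclidean_space \<Rightarrow> ereal"
  assumes c: "convex_ereal \<psi>" and d: "(fin \<psi> has_derivative (\<lambda>h. inner g h)) (at x)"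
    and xa: "\<psi> x = ereal a" and zb: "\<psi> z = ereal b"
  shows "inner (z - x) g \<le> b - a"
proof -
  define d where "d = z - x"
  have line: "((\<lambda>t. x + t *\<^sub>R d) has_derivative (\<lambda>t. t *\<^sub>R d)) (at 0)"
    by (auto intro!: derivative_eq_intros)
  have "(fin \<psi> has_derivative inner g) (at (x + 0 *\<^sub>R d))" using d by simp
  from has_derivative_compose[OF line this]
  have "((\<lambda>t. fin \<psi> (x + t *\<^sub>R d)) has_derivative (\<lambda>t. inner g (t *\<^sub>R d))) (at 0)"
    by simp
  then have "((\<lambda>t. fin \<psi> (x + t *\<^sub>R d)) has_real_derivative inner g d) (at 0)"
    by (simp add: has_field_derivative_def mult.commute[of _ "inner g d"])
  then have "((\<lambda>t. (fin \<psi> (x + t *\<^sub>R d) - fin \<psi> x) / t) \<longlongrightarrow> inner g d) (at 0)"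
    unfolding DERIV_def by simp
  then have lim: "((\<lambda>t. (fin \<psi> (x + t *\<^sub>R d) - fin \<psi> x) / t) \<longlongrightarrow> inner g d) (at_right 0)"
    by (rule tendsto_mono[OF at_le, rotated]) simp
  have "eventually (\<lambda>t. (fin \<psi> (x + t *\<^sub>R d) - fin \<psi> x) / t \<le> b - a) (at_right 0)"
  proof (rule eventually_at_rightI[of 0 1])
    fix t :: real assume t: "t \<in> {0<..<1}"
    have "(1 - t) *\<^sub>R x + t *\<^sub>R z = x + t *\<^sub>R d" by (simp add: d_def algebra_simps)
    then obtain c where "\<psi> (x + t *\<^sub>R d) = ereal c" "c \<le> (1 - t) * a + t * b"
      using convex_ereal_combination[OF c xa zb, of "1 - t" t] t by auto
    then have "fin \<psi> (x + t *\<^sub>R d) - fin \<psi> x \<le> t * (b - a)"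
      using xa by (simp add: fin_def algebra_simps)
    then show "(fin \<psi> (x + t *\<^sub>R d) - fin \<psi> x) / t \<le> b - a"
      using t by (simp add: divide_le_eq mult.commute)
  qed simp
  from tendsto_upperbound[OF lim this] show ?thesis by (simp add: d_def inner_commute)
qed

lemma legendre_grad:
  fixes \<psi> :: "'a::euclidean_space \<Rightarrow> ereal"
  assumes c: "convex_ereal \<psi>" and x: "x \<in> Xset \<psi>"
  shows "fin (legendre \<psi>) (grad \<psi> x) = inner x (grad \<psi> x) - fin \<psi> x"
proof -
  obtain A g where xin: "x \<in> interior (dom_e \<psi>)" and A: "linear A"
    and "((\<lambda>h. (fin \<psi> (x + h) - fin \<psi> x - inner g h - inner (A h) h / 2) / (norm h)\<^sup>2) \<longlongrightarrow> 0) (at 0)"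
    using x unfolding Xset_def alex_hessian_def by blast
  then have d: "(fin \<psi> has_derivative (\<lambda>h. inner g h)) (at x)"
    using has_derivative_of_second_order_expansion by blast
  have xa: "\<psi> x = ereal (fin \<psi> x)" by (rule convex_ereal_finite_on_interior[OF c xin])
  have "legendre \<psi> g = ereal (inner x g - fin \<psi> x)"
    unfolding legendre_def
  proof (rule antisym)
    show "(SUP z. ereal (inner z g) - \<psi> z) \<le> ereal (inner x g - fin \<psi> x)"
    proof (rule SUP_least)
      fix z :: 'a
      show "ereal (inner z g) - \<psi> z \<le> ereal (inner x g - fin \<psi> x)"
      proof (cases "\<psi> z")
        case (real b)
        have "inner (z - x) g \<le> b - fin \<psi> x"
          by (rule convex_ereal_gradient_inequality[OF c d xa real])
        then show ?thesis using real by (simp add: inner_diff_left)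
      qed (use convex_ereal_not_MInfty[OF c] in auto)
    qed
    show "ereal (inner x g - fin \<psi> x) \<le> (SUP z. ereal (inner z g) - \<psi> z)"
      using SUP_upper[of x UNIV "\<lambda>z. ereal (inner z g) - \<psi> z"] xa by simp
  qed
  then show ?thesis unfolding grad_eqI[OF d] by (simp add: fin_def)
qed

section \<open>Gradient and Hessian as limits of difference quotients\<close>

definition dq_step :: "nat \<Rightarrow> real" where
  "dq_step n = 1 / real (Suc n)"

lemma dq_step_pos: "0 < dq_step n"
  by (simp add: dq_step_def)

lemma LIMSEQ_dq_step: "dq_step \<longlonglongrightarrow> 0"
  unfolding dq_step_def using LIMSEQ_Suc[OF lim_inverse_n'] by simp

lemma real_Suc_dq_step: "real (Suc n) = 1 / dq_step n"
  by (simp add: dq_step_def)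

lemma eventually_dq_step_in_open:
  fixes y :: "'a::real_normed_vector"
  assumes "open U" "y \<in> U"
  shows "eventually (\<lambda>n. y + dq_step n *\<^sub>R w \<in> U) sequentially"
proof -
  obtain r where r: "r > 0" "ball y r \<subseteq> U" using assms openE by blast
  have "((\<lambda>n. dq_step n * norm w) \<longlongrightarrow> 0 * norm w) sequentially"
    by (intro tendsto_intros LIMSEQ_dq_step)
  then have "eventually (\<lambda>n. dq_step n * norm w < r) sequentially"
    using order_tendstoD(2) r(1) by fastforce
  then show ?thesis
  proof eventually_elim
    case (elim n)
    then have "y + dq_step n *\<^sub>R w \<in> ball y r" using dq_step_pos[of n] by (simp add: dist_norm)
    then show ?case using r(2) by blast
  qed
qed

lemma remainder_along_dq_step:
  fixes R :: "'a::euclidean_space \<Rightarrow> real"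
  assumes lim: "((\<lambda>h. R h / (norm h)\<^sup>2) \<longlongrightarrow> 0) (at 0)" and R0: "R 0 = 0"
  shows "(\<lambda>n. R (dq_step n *\<^sub>R v) / (dq_step n)\<^sup>2) \<longlonglongrightarrow> 0"
proof (cases "v = 0")
  case True
  then show ?thesis using R0 by simp
next
  case False
  have "(\<lambda>n. dq_step n *\<^sub>R v) \<longlonglongrightarrow> 0"
    using tendsto_scaleR[OF LIMSEQ_dq_step tendsto_const[of v]] by simp
  moreover have "\<forall>n. dq_step n *\<^sub>R v \<noteq> 0" using False dq_step_pos by (metis less_irrefl scaleR_eq_0_iff)
  ultimately have "filterlim (\<lambda>n. dq_step n *\<^sub>R v) (at 0) sequentially"
    by (intro filterlim_atI always_eventually)
  from filterlim_compose[OF lim this]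
  have "(\<lambda>n. R (dq_step n *\<^sub>R v) / (norm (dq_step n *\<^sub>R v))\<^sup>2 * (norm v)\<^sup>2) \<longlonglongrightarrow> 0"
    by (rule tendsto_mult_left_zero)
  moreover have "R (dq_step n *\<^sub>R v) / (norm (dq_step n *\<^sub>R v))\<^sup>2 * (norm v)\<^sup>2
      = R (dq_step n *\<^sub>R v) / (dq_step n)\<^sup>2" for n
    using False dq_step_pos[of n] by (simp add: power_mult_distrib)
  ultimately show ?thesis by simp
qed

text \<open>Only the values of \<open>f\<close> near \<open>y\<close> matter, which lets us apply this to a function
  that agrees with \<open>fin \<phi>\<close> on the interior of its domain only.\<close>

lemma expansion_along_dq_step:
  fixes f f' :: "'a::euclidean_space \<Rightarrow> real"
  assumes U: "open U" "y \<in> U" and eq: "\<And>z. z \<in> U \<Longrightarrow> f' z = f z" and A: "linear A"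
    and lim: "((\<lambda>h. (f (y + h) - f y - inner g h - inner (A h) h / 2) / (norm h)\<^sup>2) \<longlongrightarrow> 0) (at 0)"
  shows "\<exists>\<rho>. \<rho> \<longlonglongrightarrow> 0 \<and> (\<forall>\<^sub>F n in sequentially. f' (y + dq_step n *\<^sub>R w)
           = f' y + dq_step n * inner g w + (dq_step n)\<^sup>2 * (inner (A w) w / 2 + \<rho> n))"
proof -
  define R where "R h = f (y + h) - f y - inner g h - inner (A h) h / 2" for h
  have "R 0 = 0" using A by (simp add: R_def linear_0)
  moreover have "((\<lambda>h. R h / (norm h)\<^sup>2) \<longlongrightarrow> 0) (at 0)" using lim by (simp add: R_def)
  ultimately have "(\<lambda>n. R (dq_step n *\<^sub>R w) / (dq_step n)\<^sup>2) \<longlonglongrightarrow> 0"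
    using remainder_along_dq_step by blast
  moreover have "\<forall>\<^sub>F n in sequentially. f' (y + dq_step n *\<^sub>R w) = f' y + dq_step n * inner g w
      + (dq_step n)\<^sup>2 * (inner (A w) w / 2 + R (dq_step n *\<^sub>R w) / (dq_step n)\<^sup>2)"
    using eventually_dq_step_in_open[OF U, of w]
  proof eventually_elim
    case (elim n)
    have "A (dq_step n *\<^sub>R w) = dq_step n *\<^sub>R A w" using A by (simp add: linear_scale)
    then show ?case
      using eq[OF elim] eq[OF U(2)] dq_step_pos[of n]
      by (simp add: R_def power2_eq_square field_simps)
  qed
  ultimately show ?thesis by blast
qed

lemma lim_first_difference_quotient:
  fixes f f' :: "'a::euclidean_space \<Rightarrow> real"
  assumes U: "open U" "y \<in> U" and eq: "\<And>z. z \<in> U \<Longrightarrow> f' z = f z" and A: "linear A"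
    and lim: "((\<lambda>h. (f (y + h) - f y - inner g h - inner (A h) h / 2) / (norm h)\<^sup>2) \<longlongrightarrow> 0) (at 0)"
  shows "lim (\<lambda>n. real (Suc n) * (f' (y + dq_step n *\<^sub>R v) - f' y)) = inner g v"
proof (rule limI)
  obtain \<rho> where \<rho>: "\<rho> \<longlonglongrightarrow> 0" and ev: "\<forall>\<^sub>F n in sequentially. f' (y + dq_step n *\<^sub>R v)
      = f' y + dq_step n * inner g v + (dq_step n)\<^sup>2 * (inner (A v) v / 2 + \<rho> n)"
    using expansion_along_dq_step[OF U eq A lim] by blast
  have "(\<lambda>n. inner g v + dq_step n * (inner (A v) v / 2 + \<rho> n))
      \<longlonglongrightarrow> inner g v + 0 * (inner (A v) v / 2 + 0)"
    by (intro tendsto_intros LIMSEQ_dq_step \<rho>)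
  moreover have "\<forall>\<^sub>F n in sequentially. inner g v + dq_step n * (inner (A v) v / 2 + \<rho> n)
      = real (Suc n) * (f' (y + dq_step n *\<^sub>R v) - f' y)"
    using ev
  proof eventually_elim
    case (elim n)
    have "(t * a + t\<^sup>2 * b) / t = a + t * b" if "t > 0" for t a b :: real
      using that by (simp add: power2_eq_square field_simps)
    then show ?case unfolding real_Suc_dq_step elim using dq_step_pos[of n] by simp
  qed
  ultimately show "(\<lambda>n. real (Suc n) * (f' (y + dq_step n *\<^sub>R v) - f' y)) \<longlonglongrightarrow> inner g v"
    by (simp add: Lim_transform_eventually)
qed

lemma lim_second_difference_quotient:
  fixes f f' :: "'a::euclidean_space \<Rightarrow> real"
  assumes U: "open U" "y \<in> U" and eq: "\<And>z. z \<in> U \<Longrightarrow> f' z = f z"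
    and A: "linear A" "\<And>u v. inner (A u) v = inner u (A v)"
    and lim: "((\<lambda>h. (f (y + h) - f y - inner g h - inner (A h) h / 2) / (norm h)\<^sup>2) \<longlongrightarrow> 0) (at 0)"
  shows "lim (\<lambda>n. (real (Suc n))\<^sup>2 * (f' (y + dq_step n *\<^sub>R (i + j)) - f' (y + dq_step n *\<^sub>R i)
            - f' (y + dq_step n *\<^sub>R j) + f' y)) = inner (A i) j"
proof (rule limI)
  note expansion = expansion_along_dq_step[OF U eq A(1) lim]
  obtain \<rho>1 \<rho>2 \<rho>3 where \<rho>: "\<rho>1 \<longlonglongrightarrow> 0" "\<rho>2 \<longlonglongrightarrow> 0" "\<rho>3 \<longlonglongrightarrow> 0"
    and ev: "\<forall>\<^sub>F n in sequentially. f' (y + dq_step n *\<^sub>R (i + j)) = f' y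
          + dq_step n * inner g (i + j) + (dq_step n)\<^sup>2 * (inner (A (i + j)) (i + j) / 2 + \<rho>1 n)"
      "\<forall>\<^sub>F n in sequentially. f' (y + dq_step n *\<^sub>R i)
          = f' y + dq_step n * inner g i + (dq_step n)\<^sup>2 * (inner (A i) i / 2 + \<rho>2 n)"
      "\<forall>\<^sub>F n in sequentially. f' (y + dq_step n *\<^sub>R j)
          = f' y + dq_step n * inner g j + (dq_step n)\<^sup>2 * (inner (A j) j / 2 + \<rho>3 n)"
    using expansion[of "i + j"] expansion[of i] expansion[of j] by blast
  have polar: "inner (A (i + j)) (i + j) / 2 - inner (A i) i / 2 - inner (A j) j / 2 = inner (A i) j"
    using A(2)[of j i] A(1)
    by (simp add: linear_add inner_add_left inner_add_right inner_commute field_simps)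
  have "(\<lambda>n. inner (A i) j + (\<rho>1 n - \<rho>2 n - \<rho>3 n)) \<longlonglongrightarrow> inner (A i) j + (0 - 0 - 0)"
    by (intro tendsto_intros \<rho>)
  moreover have "\<forall>\<^sub>F n in sequentially. inner (A i) j + (\<rho>1 n - \<rho>2 n - \<rho>3 n)
      = (real (Suc n))\<^sup>2 * (f' (y + dq_step n *\<^sub>R (i + j)) - f' (y + dq_step n *\<^sub>R i)
            - f' (y + dq_step n *\<^sub>R j) + f' y)"
    using ev
  proof eventually_elim
    case (elim n)
    have alg: "(1 / t)\<^sup>2 * ((f0 + t * gij + t\<^sup>2 * c1) - (f0 + t * gi + t\<^sup>2 * c2)
        - (f0 + t * gj + t\<^sup>2 * c3) + f0) = c1 - c2 - c3"
      if "t > 0" "gij = gi + gj" for t f0 gij gi gj c1 c2 c3 :: real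
      using that by (simp add: power2_eq_square field_simps)
    show ?case
      unfolding real_Suc_dq_step elim polar[symmetric] alg[OF dq_step_pos inner_add_right]
      by simp
  qed
  ultimately show "(\<lambda>n. (real (Suc n))\<^sup>2 * (f' (y + dq_step n *\<^sub>R (i + j)) - f' (y + dq_step n *\<^sub>R i)
            - f' (y + dq_step n *\<^sub>R j) + f' y)) \<longlonglongrightarrow> inner (A i) j"
    by (simp add: Lim_transform_eventually)
qed

text \<open>Candidates for the gradient and the Alexandrov Hessian at every point \<open>y\<close>, built from
  difference quotients of \<open>fin \<phi>\<close> (set to \<open>0\<close> off the interior of the domain) along the
  steps \<open>1/(n+1)\<close>. Being limits of Borel functions they are Borel in \<open>y\<close>, and they agree
  with the actual gradient and Hessian wherever a second-order expansion exists.\<close>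

definition fin_interior :: "('a::euclidean_space \<Rightarrow> ereal) \<Rightarrow> 'a \<Rightarrow> real" where
  "fin_interior \<phi> y = indicator (interior (dom_e \<phi>)) y * fin \<phi> y"

definition dq_grad :: "('a::euclidean_space \<Rightarrow> ereal) \<Rightarrow> 'a \<Rightarrow> 'a" where
  "dq_grad \<phi> y = (\<Sum>i\<in>Basis.
      lim (\<lambda>n. real (Suc n) * (fin_interior \<phi> (y + dq_step n *\<^sub>R i) - fin_interior \<phi> y)) *\<^sub>R i)"

definition dq_hessian_entry :: "('a::euclidean_space \<Rightarrow> ereal) \<Rightarrow> 'a \<Rightarrow> 'a \<Rightarrow> 'a \<Rightarrow> real" where
  "dq_hessian_entry \<phi> y i j = lim (\<lambda>n. (real (Suc n))\<^sup>2 * (fin_interior \<phi> (y + dq_step n *\<^sub>R (i + j))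
      - fin_interior \<phi> (y + dq_step n *\<^sub>R i) - fin_interior \<phi> (y + dq_step n *\<^sub>R j) + fin_interior \<phi> y))"

definition dq_hessian :: "('a::euclidean_space \<Rightarrow> ereal) \<Rightarrow> 'a \<Rightarrow> 'a \<Rightarrow> 'a" where
  "dq_hessian \<phi> y u = (\<Sum>j\<in>Basis. (\<Sum>i\<in>Basis. inner u i * dq_hessian_entry \<phi> y i j) *\<^sub>R j)"

definition dq_remainder :: "('a::euclidean_space \<Rightarrow> ereal) \<Rightarrow> 'a \<Rightarrow> 'a \<Rightarrow> real" where
  "dq_remainder \<phi> y h = (fin_interior \<phi> (y + h) - fin_interior \<phi> y - inner (dq_grad \<phi> y) h
      - inner (dq_hessian \<phi> y h) h / 2) / (norm h)\<^sup>2"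

lemma fin_interior_eq: "z \<in> interior (dom_e \<phi>) \<Longrightarrow> fin_interior \<phi> z = fin \<phi> z"
  by (simp add: fin_interior_def)

lemma dq_hessian_entry_commute: "dq_hessian_entry \<phi> y i j = dq_hessian_entry \<phi> y j i"
  unfolding dq_hessian_entry_def add.commute[of i j] by (simp add: algebra_simps)

lemma linear_dq_hessian: "linear (dq_hessian \<phi> y)"
  by (rule linearI)
    (simp_all add: dq_hessian_def inner_add_left distrib_right sum.distrib scaleR_add_left
      sum_distrib_left mult.assoc scaleR_sum_right)

lemma dq_hessian_symmetric: "inner (dq_hessian \<phi> y u) v = inner u (dq_hessian \<phi> y v)"
proof -
  have "inner (dq_hessian \<phi> y u) v
      = (\<Sum>j\<in>Basis. \<Sum>i\<in>Basis. inner u i * dq_hessian_entry \<phi> y i j * inner j v)"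
    unfolding dq_hessian_def by (simp only: inner_sum_left inner_scaleR_left sum_distrib_right)
  also have "\<dots> = (\<Sum>i\<in>Basis. \<Sum>j\<in>Basis. inner v j * dq_hessian_entry \<phi> y j i * inner u i)"
    by (subst sum.swap) (simp add: dq_hessian_entry_commute inner_commute mult_ac)
  also have "\<dots> = inner u (dq_hessian \<phi> y v)"
    unfolding dq_hessian_def by (simp add: inner_sum_right sum_distrib_left mult_ac)
  finally show ?thesis .
qed

lemma dq_grad_dq_hessian_eq:
  fixes \<phi> :: "'a::euclidean_space \<Rightarrow> ereal"
  assumes y: "y \<in> interior (dom_e \<phi>)" and A: "linear A" "\<And>u v. inner (A u) v = inner u (A v)"
    and lim: "((\<lambda>h. (fin \<phi> (y + h) - fin \<phi> y - inner g h - inner (A h) h / 2) / (norm h)\<^sup>2) \<longlongrightarrow> 0) (at 0)"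
  shows "dq_grad \<phi> y = g" "dq_hessian \<phi> y = A"
proof -
  note quotients = open_interior y fin_interior_eq
  have "dq_grad \<phi> y = (\<Sum>i\<in>Basis. inner g i *\<^sub>R i)"
    unfolding dq_grad_def by (simp only: lim_first_difference_quotient[OF quotients A(1) lim])
  then show "dq_grad \<phi> y = g" by (simp only: euclidean_representation)
  have "dq_hessian_entry \<phi> y i j = inner (A i) j" for i j
    unfolding dq_hessian_entry_def by (rule lim_second_difference_quotient[OF quotients A lim])
  then have "dq_hessian \<phi> y u = A u" for u
    unfolding dq_hessian_def
    by (simp add: Linear_Algebra.linear_componentwise[OF A(1), symmetric] euclidean_representation)
  then show "dq_hessian \<phi> y = A" by auto
qed

lemma eventually_dq_remainder:
  assumes "y \<in> interior (dom_e \<phi>)"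
  shows "\<forall>\<^sub>F h in at 0. dq_remainder \<phi> y h = (fin \<phi> (y + h) - fin \<phi> y - inner (dq_grad \<phi> y) h
      - inner (dq_hessian \<phi> y h) h / 2) / (norm h)\<^sup>2"
proof -
  obtain r where "r > 0" "ball y r \<subseteq> interior (dom_e \<phi>)"
    using assms open_interior openE by blast
  then have "\<forall>\<^sub>F h in at 0. y + h \<in> interior (dom_e \<phi>)"
    unfolding eventually_at by (intro exI[of _ r]) (auto simp: dist_norm subset_iff)
  then show ?thesis by eventually_elim (simp add: dq_remainder_def fin_interior_eq assms)
qed

lemma Xset_iff_dq:
  "y \<in> Xset \<phi> \<longleftrightarrow> y \<in> interior (dom_e \<phi>) \<and> (dq_remainder \<phi> y \<longlongrightarrow> 0) (at 0)
     \<and> (\<exists>B>0. \<forall>u. B * norm u \<le> norm (dq_hessian \<phi> y u))"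
proof
  assume "y \<in> Xset \<phi>"
  then obtain A g where y: "y \<in> interior (dom_e \<phi>)" and A: "linear A" "\<And>u v. inner (A u) v = inner u (A v)"
    and lim: "((\<lambda>h. (fin \<phi> (y + h) - fin \<phi> y - inner g h - inner (A h) h / 2) / (norm h)\<^sup>2) \<longlongrightarrow> 0) (at 0)"
    and "bij A"
    unfolding Xset_def alex_hessian_def by blast
  note dq_eq = dq_grad_dq_hessian_eq[OF y A lim]
  have "(dq_remainder \<phi> y \<longlongrightarrow> 0) (at 0)"
    using tendsto_cong[OF eventually_dq_remainder[OF y]] lim unfolding dq_eq by simp
  moreover obtain B where "B > 0" "\<And>u. B * norm u \<le> norm (A u)"
    using linear_inj_bounded_below_pos[OF A(1) bij_is_inj[OF \<open>bij A\<close>]] by blast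
  ultimately show "y \<in> interior (dom_e \<phi>) \<and> (dq_remainder \<phi> y \<longlongrightarrow> 0) (at 0)
      \<and> (\<exists>B>0. \<forall>u. B * norm u \<le> norm (dq_hessian \<phi> y u))"
    using y unfolding dq_eq by blast
next
  assume "y \<in> interior (dom_e \<phi>) \<and> (dq_remainder \<phi> y \<longlongrightarrow> 0) (at 0)
      \<and> (\<exists>B>0. \<forall>u. B * norm u \<le> norm (dq_hessian \<phi> y u))"
  then obtain B where y: "y \<in> interior (dom_e \<phi>)" and rem: "(dq_remainder \<phi> y \<longlongrightarrow> 0) (at 0)"
    and B: "B > 0" "\<And>u. B * norm u \<le> norm (dq_hessian \<phi> y u)"
    by blast
  have "((\<lambda>h. (fin \<phi> (y + h) - fin \<phi> y - inner (dq_grad \<phi> y) h - inner (dq_hessian \<phi> y h) h / 2)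
      / (norm h)\<^sup>2) \<longlongrightarrow> 0) (at 0)"
    using tendsto_cong[OF eventually_dq_remainder[OF y]] rem by simp
  then have "alex_hessian \<phi> y (dq_hessian \<phi> y)"
    unfolding alex_hessian_def using y linear_dq_hessian dq_hessian_symmetric by blast
  moreover have "inj (dq_hessian \<phi> y)"
  proof (rule injI)
    fix u v assume "dq_hessian \<phi> y u = dq_hessian \<phi> y v"
    then have "dq_hessian \<phi> y (u - v) = 0" using linear_dq_hessian[of \<phi> y] by (simp add: linear_diff)
    then show "u = v" using B(1) B(2)[of "u - v"] by (simp add: mult_le_0_iff)
  qed
  then have "bij (dq_hessian \<phi> y)"
    using eucl.linear_inj_imp_surj[OF linear_dq_hessian] by (simp add: bij_def)
  moreover have "\<phi> y < \<infinity>" using y interior_subset unfolding dom_e_def by blast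
  ultimately show "y \<in> Xset \<phi>" unfolding Xset_def by blast
qed

section \<open>Borel measurability of \<open>X\<^sub>\<phi>\<close>\<close>

lemma le_on_open_if_le_on_dense:
  fixes p q :: "'a::topological_space \<Rightarrow> real"
  assumes dense: "\<And>X. open X \<Longrightarrow> X \<noteq> {} \<Longrightarrow> \<exists>d\<in>D. d \<in> X"
    and W: "open W" and cont: "continuous_on W p" "continuous_on W q"
    and le: "\<And>d. d \<in> D \<Longrightarrow> d \<in> W \<Longrightarrow> p d \<le> q d" and w: "w \<in> W"
  shows "p w \<le> q w"
proof (rule ccontr)
  obtain X where X: "open X" "X \<inter> W = {x \<in> W. q x < p x}"
    using open_Collect_less_Int[OF cont(2,1)] by blast
  assume "\<not> p w \<le> q w"
  then have "w \<in> X \<inter> W" using X(2) w by auto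
  then obtain d where d: "d \<in> D" "d \<in> W" "q d < p d"
    using dense[OF open_Int[OF X(1) W]] X(2) by blast
  then show False using le[OF d(1,2)] by linarith
qed

lemma tendsto_0_iff_dense:
  fixes Q :: "'a::real_normed_vector \<Rightarrow> real"
  assumes dense: "\<And>X. open X \<Longrightarrow> X \<noteq> {} \<Longrightarrow> \<exists>d\<in>range ds. d \<in> X"
    and r: "r > 0" and cont: "continuous_on {h. 0 < norm h \<and> norm h < r} Q"
  shows "(Q \<longlongrightarrow> 0) (at 0) \<longleftrightarrow> (\<forall>k. \<exists>m. \<forall>n. 0 < norm (ds n) \<and> norm (ds n) < 1 / real (Suc m)
           \<longrightarrow> \<bar>Q (ds n)\<bar> \<le> 1 / real (Suc k))"
proof
  assume L: "(Q \<longlongrightarrow> 0) (at 0)"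
  show "\<forall>k. \<exists>m. \<forall>n. 0 < norm (ds n) \<and> norm (ds n) < 1 / real (Suc m) \<longrightarrow> \<bar>Q (ds n)\<bar> \<le> 1 / real (Suc k)"
  proof
    fix k
    obtain s where s: "s > 0" "\<And>x. x \<noteq> 0 \<and> norm (x - 0) < s \<Longrightarrow> norm (Q x - 0) < 1 / real (Suc k)"
      using LIM_D[OF L, of "1 / real (Suc k)"] by auto
    obtain m where m: "inverse (real (Suc m)) < s" using reals_Archimedean[OF s(1)] by blast
    show "\<exists>m. \<forall>n. 0 < norm (ds n) \<and> norm (ds n) < 1 / real (Suc m) \<longrightarrow> \<bar>Q (ds n)\<bar> \<le> 1 / real (Suc k)"
    proof (intro exI allI impI)
      fix n assume "0 < norm (ds n) \<and> norm (ds n) < 1 / real (Suc m)"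
      then have "ds n \<noteq> 0 \<and> norm (ds n - 0) < s" using m by (auto simp: divide_inverse)
      from s(2)[OF this] show "\<bar>Q (ds n)\<bar> \<le> 1 / real (Suc k)" by simp
    qed
  qed
next
  assume R: "\<forall>k. \<exists>m. \<forall>n. 0 < norm (ds n) \<and> norm (ds n) < 1 / real (Suc m) \<longrightarrow> \<bar>Q (ds n)\<bar> \<le> 1 / real (Suc k)"
  show "(Q \<longlongrightarrow> 0) (at 0)"
  proof (rule LIM_I)
    fix e :: real assume "0 < e"
    obtain k where k: "inverse (real (Suc k)) < e" using reals_Archimedean[OF \<open>0 < e\<close>] by blast
    obtain m where m: "\<And>n. 0 < norm (ds n) \<and> norm (ds n) < 1 / real (Suc m) \<Longrightarrow> \<bar>Q (ds n)\<bar> \<le> 1 / real (Suc k)"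
      using R by blast
    define s where "s = min (1 / real (Suc m)) r"
    let ?W = "{h. 0 < norm h \<and> norm h < s}"
    have W: "?W = ball 0 s - {0}" by (auto simp: dist_norm)
    have cont_W: "continuous_on ?W (\<lambda>h. \<bar>Q h\<bar>)"
      by (intro continuous_on_rabs continuous_on_subset[OF cont]) (auto simp: s_def)
    have le: "\<bar>Q x\<bar> \<le> 1 / real (Suc k)" if "x \<in> ?W" for x
    proof (rule le_on_open_if_le_on_dense[OF dense _ cont_W continuous_on_const _ that])
      show "open ?W" unfolding W by (intro open_Diff) auto
      fix d assume "d \<in> range ds" "d \<in> ?W"
      then obtain n where n: "d = ds n" "0 < norm (ds n)" "norm (ds n) < s" by auto
      then have "norm (ds n) < 1 / real (Suc m)" unfolding s_def by linarith
      then show "\<bar>Q d\<bar> \<le> 1 / real (Suc k)" using m[of n] n by blast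
    qed
    show "\<exists>s>0. \<forall>x. x \<noteq> 0 \<and> norm (x - 0) < s \<longrightarrow> norm (Q x - 0) < e"
    proof (intro exI[of _ s] conjI allI impI)
      show "s > 0" using r by (simp add: s_def)
      fix x :: 'a assume "x \<noteq> 0 \<and> norm (x - 0) < s"
      with le[of x] k show "norm (Q x - 0) < e" by (simp add: divide_inverse)
    qed
  qed
qed

lemma bounded_below_iff_dense:
  fixes L :: "'a::euclidean_space \<Rightarrow> 'b::real_normed_vector"
  assumes dense: "\<And>X. open X \<Longrightarrow> X \<noteq> {} \<Longrightarrow> \<exists>d\<in>range ds. d \<in> X" and L: "linear L"
  shows "(\<exists>B>0. \<forall>u. B * norm u \<le> norm (L u)) \<longleftrightarrow>
    (\<exists>k. \<forall>n. 1 / real (Suc k) * norm (ds n) \<le> norm (L (ds n)))"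
proof
  assume "\<exists>B>0. \<forall>u. B * norm u \<le> norm (L u)"
  then obtain B where B: "B > 0" "\<And>u. B * norm u \<le> norm (L u)" by blast
  obtain k where k: "inverse (real (Suc k)) < B" using reals_Archimedean[OF B(1)] by blast
  have "1 / real (Suc k) * norm (ds n) \<le> norm (L (ds n))" for n
    using mult_right_mono[of "1 / real (Suc k)" B "norm (ds n)"] k B(2)[of "ds n"]
    by (simp add: divide_inverse)
  then show "\<exists>k. \<forall>n. 1 / real (Suc k) * norm (ds n) \<le> norm (L (ds n))" by blast
next
  assume "\<exists>k. \<forall>n. 1 / real (Suc k) * norm (ds n) \<le> norm (L (ds n))"
  then obtain k where k: "\<And>n. 1 / real (Suc k) * norm (ds n) \<le> norm (L (ds n))" by blast
  have cont: "continuous_on UNIV (\<lambda>u. norm (L u))"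
    using L by (intro continuous_intros linear_continuous_on linear_conv_bounded_linear[THEN iffD1])
  have "1 / real (Suc k) * norm u \<le> norm (L u)" for u
  proof (rule le_on_open_if_le_on_dense[OF dense open_UNIV _ cont _ UNIV_I])
    show "continuous_on UNIV (\<lambda>u. 1 / real (Suc k) * norm u)" by (intro continuous_intros)
  qed (use k in auto)
  then show "\<exists>B>0. \<forall>u. B * norm u \<le> norm (L u)"
    by (intro exI[of _ "1 / real (Suc k)"]) auto
qed

lemma continuous_on_dq_remainder:
  fixes \<phi> :: "'a::euclidean_space \<Rightarrow> ereal"
  assumes cont: "continuous_on (interior (dom_e \<phi>)) (fin \<phi>)"
    and r: "r > 0" "ball y r \<subseteq> interior (dom_e \<phi>)"
  shows "continuous_on {h. 0 < norm h \<and> norm h < r} (dq_remainder \<phi> y)"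
proof -
  let ?W = "{h. 0 < norm h \<and> norm h < r}"
  have sub: "(\<lambda>h. y + h) ` ?W \<subseteq> interior (dom_e \<phi>)" using r by (auto simp: dist_norm subset_iff)
  have fin: "continuous_on ?W (\<lambda>h. fin \<phi> (y + h))"
    by (rule continuous_on_compose2[OF cont _ sub]) (intro continuous_intros)
  have hess: "continuous_on ?W (dq_hessian \<phi> y)"
    by (intro linear_continuous_on linear_conv_bounded_linear[THEN iffD1] linear_dq_hessian)
  have nonzero: "\<forall>h\<in>?W. (norm h)\<^sup>2 \<noteq> 0" "\<forall>h\<in>?W. (2::real) \<noteq> 0" by simp_all
  have expr: "continuous_on ?W (\<lambda>h. (fin \<phi> (y + h) - fin \<phi> y - inner (dq_grad \<phi> y) h
      - inner (dq_hessian \<phi> y h) h / 2) / (norm h)\<^sup>2)"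
    by (intro continuous_on_divide continuous_on_diff continuous_on_inner continuous_on_const
        continuous_on_id continuous_on_power continuous_on_norm fin hess nonzero)
  have eq: "dq_remainder \<phi> y h = (fin \<phi> (y + h) - fin \<phi> y - inner (dq_grad \<phi> y) h
      - inner (dq_hessian \<phi> y h) h / 2) / (norm h)\<^sup>2" if "h \<in> ?W" for h
  proof -
    have "y + h \<in> interior (dom_e \<phi>)" "y \<in> interior (dom_e \<phi>)" using that sub r by auto
    then show ?thesis by (simp add: dq_remainder_def fin_interior_eq)
  qed
  show ?thesis by (rule iffD2[OF continuous_on_cong[OF refl eq] expr])
qed

context
  fixes \<phi> :: "'a::euclidean_space \<Rightarrow> ereal"
  assumes cont: "continuous_on (interior (dom_e \<phi>)) (fin \<phi>)"
begin

lemma sets_borel_interior_dom_e[measurable]: "interior (dom_e \<phi>) \<in> sets borel"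
  by simp

lemma borel_measurable_fin_interior[measurable]: "fin_interior \<phi> \<in> borel_measurable borel"
proof -
  have "(\<lambda>x. indicator (interior (dom_e \<phi>)) x *\<^sub>R fin \<phi> x) \<in> borel_measurable borel"
    by (rule borel_measurable_continuous_on_indicator[OF sets_borel_interior_dom_e cont])
  then show ?thesis by (simp add: fin_interior_def[abs_def])
qed

lemma borel_measurable_dq_grad[measurable]: "dq_grad \<phi> \<in> borel_measurable borel"
  unfolding dq_grad_def[abs_def] by measurable

lemma borel_measurable_dq_hessian_entry[measurable]:
  "(\<lambda>y. dq_hessian_entry \<phi> y i j) \<in> borel_measurable borel"
  unfolding dq_hessian_entry_def by measurable

lemma borel_measurable_dq_hessian[measurable]: "(\<lambda>y. dq_hessian \<phi> y u) \<in> borel_measurable borel"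
  unfolding dq_hessian_def by measurable

lemma borel_measurable_dq_remainder[measurable]: "(\<lambda>y. dq_remainder \<phi> y h) \<in> borel_measurable borel"
  unfolding dq_remainder_def by measurable

lemma sets_borel_Xset[measurable]: "Xset \<phi> \<in> sets borel"
proof -
  obtain D :: "'a set" where D: "countable D" "\<And>X. open X \<Longrightarrow> X \<noteq> {} \<Longrightarrow> \<exists>d\<in>D. d \<in> X"
    by (rule countable_dense_setE) blast
  then have "D \<noteq> {}" by blast
  define ds where "ds = from_nat_into D"
  have dense: "\<And>X. open X \<Longrightarrow> X \<noteq> {} \<Longrightarrow> \<exists>d\<in>range ds. d \<in> X"
    using D \<open>D \<noteq> {}\<close> by (simp add: ds_def)
  have "y \<in> Xset \<phi> \<longleftrightarrow> y \<in> interior (dom_e \<phi>) \<and>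
      (\<forall>k. \<exists>m. \<forall>n. 0 < norm (ds n) \<and> norm (ds n) < 1 / real (Suc m)
         \<longrightarrow> \<bar>dq_remainder \<phi> y (ds n)\<bar> \<le> 1 / real (Suc k)) \<and>
      (\<exists>k. \<forall>n. 1 / real (Suc k) * norm (ds n) \<le> norm (dq_hessian \<phi> y (ds n)))" for y
  proof (cases "y \<in> interior (dom_e \<phi>)")
    case True
    then obtain r where "r > 0" "ball y r \<subseteq> interior (dom_e \<phi>)" using open_interior openE by blast
    then show ?thesis
      using Xset_iff_dq[of y \<phi>] tendsto_0_iff_dense[OF dense _ continuous_on_dq_remainder[OF cont]]
        bounded_below_iff_dense[OF dense linear_dq_hessian]
      by simp
  qed (simp add: Xset_iff_dq)
  then have "Xset \<phi> = {y \<in> space borel. y \<in> interior (dom_e \<phi>) \<and>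
      (\<forall>k. \<exists>m. \<forall>n. 0 < norm (ds n) \<and> norm (ds n) < 1 / real (Suc m)
         \<longrightarrow> \<bar>dq_remainder \<phi> y (ds n)\<bar> \<le> 1 / real (Suc k)) \<and>
      (\<exists>k. \<forall>n. 1 / real (Suc k) * norm (ds n) \<le> norm (dq_hessian \<phi> y (ds n)))}"
    by auto
  also have "\<dots> \<in> sets borel" by measurable
  finally show ?thesis .
qed

lemma borel_measurable_indicator_Xset:
  fixes F :: "real \<Rightarrow> real"
  assumes F: "F \<in> borel_measurable borel"
  shows "(\<lambda>y. indicator (Xset \<phi>) y *\<^sub>R F (fin \<phi> y)) \<in> borel_measurable lebesgue"
proof -
  have "(\<lambda>y. indicator (Xset \<phi>) y * F (fin_interior \<phi> y)) \<in> borel_measurable lborel"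
    using F by measurable
  then have "(\<lambda>y. indicator (Xset \<phi>) y * F (fin_interior \<phi> y)) \<in> borel_measurable lebesgue"
    by (rule measurable_completion)
  moreover have "indicator (Xset \<phi>) y * F (fin_interior \<phi> y) = indicator (Xset \<phi>) y *\<^sub>R F (fin \<phi> y)" for y
    by (auto simp: indicator_def Xset_iff_dq fin_interior_eq)
  ultimately show ?thesis by simp
qed

end

section \<open>The competitor \<open>F\<^sub>2 \<circ> \<psi>\<^sup>*\<close>\<close>

lemma F2_legendre_in_Fplus:
  fixes \<psi> :: "'a::euclidean_space \<Rightarrow> ereal"
  assumes cvx: "convex_ereal \<psi>" and dom: "dom_e \<psi> \<noteq> {}"
    and F2: "\<forall>t. 0 < F2 t" "F2 \<in> borel_measurable borel"
    and I2: "0 < IcompF F2 (legendre \<psi>)" "IcompF F2 (legendre \<psi>) < \<infinity>"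
  shows "(\<lambda>y. F2 (fin (legendre \<psi>) y)) \<in> Fplus \<psi>"
  using F2(1) I2 borel_measurable_indicator_Xset[OF
      continuous_on_fin_interior[OF convex_ereal_legendre[OF cvx dom]] F2(2)]
  unfolding Fplus_def set_borel_measurable_def by (simp add: IcompF_def)

lemma Vorlicz_normalize_F2_legendre:
  fixes \<psi> :: "'a::euclidean_space \<Rightarrow> ereal"
  assumes cvx: "convex_ereal \<psi>"
    and F1: "\<forall>t. 0 < F1 t" "F1 \<in> borel_measurable borel" and F2: "\<forall>t. 0 < F2 t"
    and I2: "0 < IcompF F2 (legendre \<psi>)" "IcompF F2 (legendre \<psi>) < \<infinity>"
    and h: "\<forall>t>0. 0 < h t"
  shows "Vorlicz h F1 F2 \<psi> (normalize \<psi> (\<lambda>y. F2 (fin (legendre \<psi>) y))) = orlicz_bound h F1 F2 \<psi>"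
proof -
  define c where "c = sqrt (2 * pi) ^ DIM('a) / enn2real (IcompF F2 (legendre \<psi>))"
  have "c > 0"
    using I2 unfolding c_def by (simp add: enn2real_positive_iff)
  then have hc: "h c > 0" using h by blast
  have const: "h (normalize \<psi> (\<lambda>y. F2 (fin (legendre \<psi>) y)) (grad \<psi> x)
      / F2 (inner x (grad \<psi> x) - fin \<psi> x)) = h c" if "x \<in> Xset \<psi>" for x
    using F2[rule_format, of "inner x (grad \<psi> x) - fin \<psi> x"]
    unfolding normalize_def legendre_grad[OF cvx that] c_def by (simp add: IcompF_def)
  have meas: "(\<lambda>x. ennreal (F1 (fin \<psi> x)) * indicator (Xset \<psi>) x) \<in> borel_measurable lebesgue"
    using borel_measurable_indicator_Xset[OF continuous_on_fin_interior[OF cvx] F1(2)]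
    by (simp add: indicator_mult_ennreal mult.commute)
  have "Vorlicz h F1 F2 \<psi> (normalize \<psi> (\<lambda>y. F2 (fin (legendre \<psi>) y)))
      = (\<integral>\<^sup>+ x. ennreal (h c) * (ennreal (F1 (fin \<psi> x)) * indicator (Xset \<psi>) x) \<partial>lebesgue)"
    unfolding Vorlicz_def
    by (intro nn_integral_cong)
      (auto simp: indicator_def const hc F1(1) ennreal_mult less_imp_le)
  also have "\<dots> = ennreal (h c) * IcompF F1 \<psi>"
    by (simp add: nn_integral_cmult[OF meas] IcompF_def Iint_def)
  finally show ?thesis
    by (simp add: orlicz_bound_def c_def mult.commute)
qed

lemma orlicz_bounds_from_competitor:
  assumes g: "g \<in> Fplus \<psi>" and V: "Vorlicz h F1 F2 \<psi> (normalize \<psi> g) = orlicz_bound h F1 F2 \<psi>"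
  shows "as_orlicz_inf h F1 F2 \<psi> \<le> orlicz_bound h F1 F2 \<psi>"
    and "as_orlicz_sup h F1 F2 \<psi> \<ge> orlicz_bound h F1 F2 \<psi>"
    and "log_concave_on (Xset (legendre \<psi>)) g \<Longrightarrow> as_orlicz_inf h F1 F2 \<psi> \<le> G_orlicz_inf h F1 F2 \<psi>
           \<and> G_orlicz_inf h F1 F2 \<psi> \<le> orlicz_bound h F1 F2 \<psi>"
    and "log_concave_on (Xset (legendre \<psi>)) g \<Longrightarrow> as_orlicz_sup h F1 F2 \<psi> \<ge> G_orlicz_sup h F1 F2 \<psi>
           \<and> G_orlicz_sup h F1 F2 \<psi> \<ge> orlicz_bound h F1 F2 \<psi>"
proof -
  let ?V = "\<lambda>g. Vorlicz h F1 F2 \<psi> (normalize \<psi> g)"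
  have sub: "Lclass \<psi> \<subseteq> Fplus \<psi>" by (auto simp: Lclass_def)
  show "as_orlicz_inf h F1 F2 \<psi> \<le> orlicz_bound h F1 F2 \<psi>"
    unfolding as_orlicz_inf_def V[symmetric] by (rule INF_lower[OF g])
  show "as_orlicz_sup h F1 F2 \<psi> \<ge> orlicz_bound h F1 F2 \<psi>"
    unfolding as_orlicz_sup_def V[symmetric] by (rule SUP_upper[OF g])
  assume "log_concave_on (Xset (legendre \<psi>)) g"
  then have gL: "g \<in> Lclass \<psi>" using g by (simp add: Lclass_def)
  show "as_orlicz_inf h F1 F2 \<psi> \<le> G_orlicz_inf h F1 F2 \<psi> \<and> G_orlicz_inf h F1 F2 \<psi> \<le> orlicz_bound h F1 F2 \<psi>"
    unfolding as_orlicz_inf_def G_orlicz_inf_def V[symmetric]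
    using INF_superset_mono[OF sub order_refl, of ?V] INF_lower[OF gL, of ?V] by simp
  show "as_orlicz_sup h F1 F2 \<psi> \<ge> G_orlicz_sup h F1 F2 \<psi> \<and> G_orlicz_sup h F1 F2 \<psi> \<ge> orlicz_bound h F1 F2 \<psi>"
    unfolding as_orlicz_sup_def G_orlicz_sup_def V[symmetric]
    using SUP_subset_mono[OF sub order_refl, of ?V] SUP_upper[OF gL, of ?V] by simp
qed

lemma orlicz_bounds:
  fixes \<psi> :: "'a::euclidean_space \<Rightarrow> ereal"
  assumes cvx: "convex_ereal \<psi>" and dom: "dom_e \<psi> \<noteq> {}"
    and F1: "\<forall>t. 0 < F1 t" "F1 \<in> borel_measurable borel"
    and F2: "\<forall>t. 0 < F2 t" "F2 \<in> borel_measurable borel"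
    and I2: "0 < IcompF F2 (legendre \<psi>)" "IcompF F2 (legendre \<psi>) < \<infinity>"
    and h: "\<forall>t>0. 0 < h t"
  shows "as_orlicz_inf h F1 F2 \<psi> \<le> orlicz_bound h F1 F2 \<psi>"
    and "as_orlicz_sup h F1 F2 \<psi> \<ge> orlicz_bound h F1 F2 \<psi>"
    and "log_concave_on (Xset (legendre \<psi>)) (\<lambda>y. F2 (fin (legendre \<psi>) y)) \<Longrightarrow>
           as_orlicz_inf h F1 F2 \<psi> \<le> G_orlicz_inf h F1 F2 \<psi> \<and> G_orlicz_inf h F1 F2 \<psi> \<le> orlicz_bound h F1 F2 \<psi>"
    and "log_concave_on (Xset (legendre \<psi>)) (\<lambda>y. F2 (fin (legendre \<psi>) y)) \<Longrightarrow>
           as_orlicz_sup h F1 F2 \<psi> \<ge> G_orlicz_sup h F1 F2 \<psi> \<and> G_orlicz_sup h F1 F2 \<psi> \<ge> orlicz_bound h F1 F2 \<psi>"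
  using orlicz_bounds_from_competitor[OF F2_legendre_in_Fplus[OF cvx dom F2 I2]
      Vorlicz_normalize_F2_legendre[OF cvx F1 F2(1) I2 h]] by blast+

theorem proposition2p1:
  fixes \<psi> :: "'a::euclidean_space \<Rightarrow> ereal"
    and F1 F2 h :: "real \<Rightarrow> real"
  assumes cvx: "convex_ereal \<psi>"
    and dom: "interior (dom_e \<psi>) \<noteq> {}"
    and F1: "\<forall>t. 0 < F1 t" "F1 \<in> borel_measurable borel"
    and F2: "\<forall>t. 0 < F2 t" "F2 \<in> borel_measurable borel"
    and I1: "0 < IcompF F1 \<psi>" "IcompF F1 \<psi> < \<infinity>"
    and I2: "0 < IcompF F2 (legendre \<psi>)" "IcompF F2 (legendre \<psi>) < \<infinity>"
    and h: "continuous_on {0<..} h" "\<forall>t>0. 0 < h t"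
  shows
    "(h \<in> PhiClass \<longrightarrow>
        as_orlicz_inf h F1 F2 \<psi> \<le> orlicz_bound h F1 F2 \<psi> \<and>
        (log_concave_on (Xset (legendre \<psi>)) (\<lambda>y. F2 (fin (legendre \<psi>) y)) \<longrightarrow>
           as_orlicz_inf h F1 F2 \<psi> \<le> G_orlicz_inf h F1 F2 \<psi> \<and>
           G_orlicz_inf h F1 F2 \<psi> \<le> orlicz_bound h F1 F2 \<psi>) \<and>
        (0 < IcompF expneg \<psi> \<and> IcompF expneg \<psi> < \<infinity> \<and>
         0 < IcompF expneg (legendre \<psi>) \<and> IcompF expneg (legendre \<psi>) < \<infinity> \<longrightarrow>
           as_orlicz_inf h expneg expneg \<psi> \<le> G_orlicz_inf h expneg expneg \<psi> \<and>
           G_orlicz_inf h expneg expneg \<psi> \<le> orlicz_bound h expneg expneg \<psi>))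
   \<and> (h \<in> PsiClass \<longrightarrow>
        as_orlicz_sup h F1 F2 \<psi> \<ge> orlicz_bound h F1 F2 \<psi> \<and>
        (log_concave_on (Xset (legendre \<psi>)) (\<lambda>y. F2 (fin (legendre \<psi>) y)) \<longrightarrow>
           as_orlicz_sup h F1 F2 \<psi> \<ge> G_orlicz_sup h F1 F2 \<psi> \<and>
           G_orlicz_sup h F1 F2 \<psi> \<ge> orlicz_bound h F1 F2 \<psi>) \<and>
        (0 < IcompF expneg \<psi> \<and> IcompF expneg \<psi> < \<infinity> \<and>
         0 < IcompF expneg (legendre \<psi>) \<and> IcompF expneg (legendre \<psi>) < \<infinity> \<longrightarrow>
           as_orlicz_sup h expneg expneg \<psi> \<ge> G_orlicz_sup h expneg expneg \<psi> \<and>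
           G_orlicz_sup h expneg expneg \<psi> \<ge> orlicz_bound h expneg expneg \<psi>))"
proof -
  have dom_e: "dom_e \<psi> \<noteq> {}" using dom interior_subset by blast
  note general = orlicz_bounds[OF cvx dom_e F1 F2 I2 h(2)]
  have expneg: "\<forall>t. 0 < expneg t" "expneg \<in> borel_measurable borel"
    unfolding expneg_def by simp measurable
  have "log_concave_on (Xset (legendre \<psi>)) (\<lambda>y. expneg (fin (legendre \<psi>) y))"
    by (rule log_concave_on_expneg[OF convex_ereal_legendre[OF cvx dom_e]])
  moreover note exponential = orlicz_bounds(3,4)[OF cvx dom_e expneg expneg _ _ h(2)]
  ultimately show ?thesis using general by blast
qed

end
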